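(* Consider two $2\times 2$ matrices $G, A$ of real numbers, where $A$ is symmetric and positive definite, i.e. \[ G=\begin{pmatrix}a&b\\ c&d\end{pmatrix},\qquad A=\begin{pmatrix}\alpha&\beta\\ \beta&\gamma\end{pmatrix} \quad(\alpha>0,\ \delta:=\det(A)=\alpha\gamma-\beta^{2}>0). \] Then there exists a symmetric matrix $S=\begin{pmatrix}s_{11}& s_{12}\\ s_{12}& s_{22}\end{pmatrix}$ solving \[ SG+G^TS=2SAS\quad \text{and}\quad \mathrm{trace}(G-AS)=0, \] and which is of the following form: \begin{itemize} \item[(i)] If $\mathrm{trace}(G)=a+d=0$, we can choose $S=0$. \item[(ii)] If $\mathrm{trace}(G)=a+d \neq 0$ and $G$ is singular, i.e. $\det(G)=ad-bc=0$, we can choose \begin{eqnarray*} S&=&\frac{a+d}{\alpha a^2+2\beta ab + \gamma b^2}\begin{pmatrix}a^2& ab\\ ab& b^2\end{pmatrix}, \qquad \text{if }\ b\not =0,\\[3pt] S&=&\frac{a+d}{\alpha c^2+2\beta cd + \gamma d^2}\begin{pmatrix}c^2& cd\\ cd& d^2\end{pmatrix}, \qquad \text{if }\ b=0,\ c\not=0, \end{eqnarray*} and in case $b=c=0$, we may choose \begin{eqnarray*} S\ =\ \begin{pmatrix}\frac{a}{\alpha}& 0\\ 0& 0\end{pmatrix}, \qquad \text{if }\ a\not =0,\qquad S\ =\ \begin{pmatrix}0& 0\\ 0& \frac{d}{\gamma}\end{pmatrix}, \qquad \text{if }\ d\not=0. \end{eqnarray*} \item[(iii)] If $\mathrm{trace}(G)=a+d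 \neq 0$ and $G$ is non-singular, i.e. $\det(G)=ad-bc\not=0$, we can choose \begin{eqnarray*} S\ =\ \kappa\begin{pmatrix}\gamma a(a+d) + \alpha c^2 - \gamma bc - 2\beta ac& \alpha cd + \gamma ab - 2\beta ad\\ \alpha cd + \gamma ab - 2\beta ad& \alpha d(a+d) + \gamma b^2 - \alpha bc - 2\beta bd\end{pmatrix}, \end{eqnarray*} where \[ \kappa=\frac{a+d}{ (\alpha \gamma-\beta^2) (a+d)^2 +\big( \gamma b - \alpha c + \beta(a-d)\big)^2}. \] \end{itemize}
   Context: Dimension $d=2$. All matrices have real entries. *)

theory Defs
  imports "HOL-Analysis.Analysis"
begin

definition mat2 :: "real \<Rightarrow> real \<Rightarrow> real \<Rightarrow> real \<Rightarrow> real^2^2" where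
  "mat2 p q r s = vector [vector [p, q], vector [r, s]]"

definition is_sol :: "real^2^2 \<Rightarrow> real^2^2 \<Rightarrow> real^2^2 \<Rightarrow> bool" where
  "is_sol G A S \<longleftrightarrow> transpose S = S
     \<and> S ** G + transpose G ** S = (2::real) *\<^sub>R (S ** A ** S)
     \<and> trace (G - A ** S) = 0"

end

theory Submission
  imports Defs
begin

text \<open>
  For symmetric \<open>S\<close> the equation \<open>S G + G\<^sup>T S = 2 S A S\<close> reduces to a scalar equation as soon as
  \<open>S = k v v\<^sup>T\<close> with \<open>v\<^sup>T G = t v\<^sup>T\<close>, \<open>t = tr G\<close>: both sides are then multiples of
  \<open>v v\<^sup>T\<close>, and \<open>k = t / (v\<^sup>T A v)\<close> satisfies the equation and the trace condition at
  once, the denominator being positive because \<open>A\<close> is positive definite. When \<open>G\<close> is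
  singular its nonzero rows (or a unit vector, if \<open>G\<close> is diagonal) are such left eigenvectors
  for the eigenvalue \<open>t\<close>, which gives all of case (ii). The formula of case (iii) is checked
  by expanding the equation entrywise; it only needs \<open>t \<noteq> 0\<close>, not \<open>det G \<noteq> 0\<close>, so together
  with \<open>S = 0\<close> for \<open>t = 0\<close> it also shows that a solution always exists.
\<close>

definition outer_prod :: "real^'n \<Rightarrow> real^'m \<Rightarrow> real^'m^'n" where
  "outer_prod u w = (\<chi> i j. u $ i * w $ j)"

lemma transpose_outer_prod: "transpose (outer_prod u w) = outer_prod w u"
  by (simp add: transpose_def outer_prod_def vec_eq_iff)

lemma outer_prod_scaleR_left: "outer_prod (c *\<^sub>R u) w = c *\<^sub>R outer_prod u w"
  by (simp add: outer_prod_def vec_eq_iff)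

lemma outer_prod_scaleR_right: "outer_prod u (c *\<^sub>R w) = c *\<^sub>R outer_prod u w"
  by (simp add: outer_prod_def vec_eq_iff mult.left_commute)

lemma outer_prod_matrix_mult: "outer_prod u w ** B = outer_prod u (w v* B)"
  by (simp add: outer_prod_def matrix_matrix_mult_def vector_matrix_mult_def vec_eq_iff
      sum_distrib_left mult.assoc)

lemma matrix_mult_outer_prod: "B ** outer_prod u w = outer_prod (B *v u) w"
  by (simp add: outer_prod_def matrix_matrix_mult_def matrix_vector_mult_def vec_eq_iff
      sum_distrib_right mult.assoc)

lemma vector_matrix_mult_outer_prod: "x v* outer_prod u w = (x \<bullet> u) *\<^sub>R w"
  by (simp add: outer_prod_def vector_matrix_mult_def inner_vec_def vec_eq_iff
      sum_distrib_right mult.assoc)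

lemma trace_matrix_mult_outer_prod: "trace (B ** outer_prod u w) = w \<bullet> (B *v u)"
  unfolding matrix_mult_outer_prod by (simp add: trace_def outer_prod_def inner_vec_def mult.commute)

lemma trace_scaleR: "trace (c *\<^sub>R A) = c * trace (A :: real^'n^'n)"
  by (simp add: trace_def sum_distrib_left)

lemma outer_prod_solves_riccati:
  fixes G A :: "real^'n^'n" and v :: "real^'n"
  defines "S \<equiv> (trace G / (v \<bullet> (A *v v))) *\<^sub>R outer_prod v v"
  assumes eigen: "v v* G = trace G *\<^sub>R v" and nondeg: "v \<bullet> (A *v v) \<noteq> 0"
  shows "transpose S = S"
    and "S ** G + transpose G ** S = (2::real) *\<^sub>R (S ** A ** S)"
    and "trace (G - A ** S) = 0"
proof -
  define P where "P = outer_prod v v"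
  define k where "k = trace G / (v \<bullet> (A *v v))"
  have S: "S = k *\<^sub>R P"
    by (simp add: S_def k_def P_def)
  have k: "k * (v \<bullet> (A *v v)) = trace G"
    using nondeg by (simp add: k_def)
  have PG: "P ** G = trace G *\<^sub>R P"
    by (simp add: P_def outer_prod_matrix_mult eigen outer_prod_scaleR_right)
  have GP: "transpose G ** P = trace G *\<^sub>R P"
    by (simp add: P_def matrix_mult_outer_prod eigen outer_prod_scaleR_left)
  have PAP: "P ** A ** P = (v \<bullet> (A *v v)) *\<^sub>R P"
    by (simp add: P_def outer_prod_matrix_mult vector_matrix_mult_outer_prod dot_lmul_matrix
        outer_prod_scaleR_right)
  have AP: "trace (A ** P) = v \<bullet> (A *v v)"
    by (simp add: P_def trace_matrix_mult_outer_prod)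
  show "transpose S = S"
    by (simp add: S P_def transpose_outer_prod transpose_scalar)
  have "S ** G + transpose G ** S = (2 * k * trace G) *\<^sub>R P"
    by (simp add: S PG GP scalar_matrix_assoc[symmetric] matrix_scalar_ac flip: scaleR_add_left)
  also have "\<dots> = (2::real) *\<^sub>R (S ** A ** S)"
    by (simp add: S PAP scalar_matrix_assoc[symmetric] matrix_scalar_ac k[symmetric])
  finally show "S ** G + transpose G ** S = (2::real) *\<^sub>R (S ** A ** S)" .
  show "trace (G - A ** S) = 0"
    by (simp add: S trace_sub matrix_scalar_ac scalar_matrix_assoc[symmetric] trace_scaleR AP k)
qed

lemma mat2_nth [simp]:
  "mat2 p q r s $ 1 $ 1 = p" "mat2 p q r s $ 1 $ 2 = q"
  "mat2 p q r s $ 2 $ 1 = r" "mat2 p q r s $ 2 $ 2 = s"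
  by (simp_all add: mat2_def)

lemma mat2_eq_iff: "M = mat2 p q r s \<longleftrightarrow> M $ 1 $ 1 = p \<and> M $ 1 $ 2 = q \<and> M $ 2 $ 1 = r \<and> M $ 2 $ 2 = s"
  by (auto simp: vec_eq_iff forall_2)

lemma scaleR_mat2: "k *\<^sub>R mat2 p q r s = mat2 (k * p) (k * q) (k * r) (k * s)"
  by (simp add: mat2_eq_iff)

lemma trace_mat2: "trace (mat2 p q r s) = p + s"
  by (simp add: trace_def sum_2)

lemma outer_prod_vector2: "outer_prod (vector [p, q]) (vector [p, q]) = mat2 (p^2) (p * q) (p * q) (q^2)"
  by (simp add: mat2_eq_iff outer_prod_def power2_eq_square)

lemma vector2_matrix_mult_mat2: "vector [p, q] v* mat2 a b c d = vector [p * a + q * c, p * b + q * d]"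
  by (simp add: vec_eq_iff forall_2 vector_matrix_mult_def sum_2 mult.commute)

lemma vector2_quadratic_form_mat2:
  "vector [p, q] \<bullet> (mat2 x y y z *v vector [p, q]) = x * p^2 + 2 * y * p * q + z * q^2"
  by (simp add: inner_vec_def matrix_vector_mult_def sum_2 power2_eq_square algebra_simps)

lemma binary_quadratic_form_pos:
  fixes x y z u v :: real
  assumes "x > 0" "x * z - y^2 > 0" "u \<noteq> 0 \<or> v \<noteq> 0"
  shows "x * u^2 + 2 * y * u * v + z * v^2 > 0"
proof -
  have "(x * u + y * v)^2 + (x * z - y^2) * v^2 > 0"
    using assms by (cases "v = 0") (simp_all add: add_nonneg_pos)
  also have "(x * u + y * v)^2 + (x * z - y^2) * v^2 = x * (x * u^2 + 2 * y * u * v + z * v^2)"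
    by (simp add: algebra_simps power2_eq_square)
  finally show ?thesis
    using \<open>x > 0\<close> by (simp add: zero_less_mult_iff)
qed

lemma is_sol_zero_iff: "is_sol G A 0 \<longleftrightarrow> trace G = 0"
  by (simp add: is_sol_def transpose_def vec_eq_iff)

lemma is_sol_mat2_iff:
  "is_sol (mat2 a b c d) (mat2 x y y z) (mat2 p q q s) \<longleftrightarrow>
     a * p + c * q = x * p^2 + 2 * y * p * q + z * q^2
   \<and> b * p + (a + d) * q + c * s = 2 * (x * p * q + y * (p * s + q^2) + z * q * s)
   \<and> b * q + d * s = x * q^2 + 2 * y * q * s + z * s^2
   \<and> x * p + 2 * y * q + z * s = a + d"
  unfolding is_sol_def
  by (simp add: vec_eq_iff forall_2 matrix_matrix_mult_def sum_2
      transpose_def trace_def power2_eq_square algebra_simps)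
     (auto simp: algebra_simps)

lemma is_sol_mat2_rank_one:
  assumes "x > 0" "x * z - y^2 > 0" "p \<noteq> 0 \<or> q \<noteq> 0"
    and "p * a + q * c = (a + d) * p" "p * b + q * d = (a + d) * q"
  shows "is_sol (mat2 a b c d) (mat2 x y y z)
           (((a + d) / (x * p^2 + 2 * y * p * q + z * q^2)) *\<^sub>R mat2 (p^2) (p * q) (p * q) (q^2))"
proof -
  let ?v = "vector [p, q] :: real^2"
  have "?v v* mat2 a b c d = trace (mat2 a b c d) *\<^sub>R ?v"
    using assms(4,5) by (simp add: vector2_matrix_mult_mat2 trace_mat2 vec_eq_iff forall_2)
  moreover have "?v \<bullet> (mat2 x y y z *v ?v) \<noteq> 0"
    using binary_quadratic_form_pos[OF assms(1-3)] by (simp add: vector2_quadratic_form_mat2)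
  ultimately show ?thesis
    using outer_prod_solves_riccati[of ?v "mat2 a b c d" "mat2 x y y z"]
    by (simp add: is_sol_def vector2_quadratic_form_mat2 trace_mat2 outer_prod_vector2)
qed

lemma is_sol_mat2_nonzero_trace:
  fixes a b c d x y z :: real
  assumes "x > 0" "x * z - y^2 > 0" "a + d \<noteq> 0"
  defines "\<kappa> \<equiv> (a + d) / ((x * z - y^2) * (a + d)^2 + (z * b - x * c + y * (a - d))^2)"
  shows "is_sol (mat2 a b c d) (mat2 x y y z) (\<kappa> *\<^sub>R mat2
               (z * a * (a + d) + x * c^2 - z * b * c - 2 * y * a * c)
               (x * c * d + z * a * b - 2 * y * a * d)
               (x * c * d + z * a * b - 2 * y * a * d)
               (x * d * (a + d) + z * b^2 - x * b * c - 2 * y * b * d))"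
proof -
  have "(x * z - y^2) * (a + d)^2 + (z * b - x * c + y * (a - d))^2 > 0"
    using assms by (simp add: add_pos_nonneg)
  then have \<kappa>: "\<kappa> * ((x * z - y^2) * (a + d)^2 + (z * b - x * c + y * (a - d))^2) = a + d"
    by (simp add: \<kappa>_def)
  show ?thesis
    unfolding scaleR_mat2 is_sol_mat2_iff
    by (intro conjI; insert \<kappa>; algebra)
qed

lemma is_sol_mat2_exists:
  assumes "x > 0" "x * z - y^2 > 0"
  shows "\<exists>S. is_sol (mat2 a b c d) (mat2 x y y z) S"
proof (cases "a + d = 0")
  case True
  then show ?thesis
    by (metis is_sol_zero_iff trace_mat2)
next
  case False
  then show ?thesis
    using is_sol_mat2_nonzero_trace[OF assms] by blast
qed

theorem theorem2p13:
  fixes a b c d \<alpha> \<beta> \<gamma> :: real and G A :: "real^2^2"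
  assumes hG: "G = mat2 a b c d"
    and hA: "A = mat2 \<alpha> \<beta> \<beta> \<gamma>"
    and h\<alpha>: "\<alpha> > 0"
    and h\<delta>: "\<alpha> * \<gamma> - \<beta>^2 > 0"
  shows "(\<exists>S. is_sol G A S)
    \<and> (a + d = 0 \<longrightarrow> is_sol G A 0)
    \<and> (a + d \<noteq> 0 \<and> a * d - b * c = 0 \<and> b \<noteq> 0 \<longrightarrow>
         is_sol G A (((a + d) / (\<alpha> * a^2 + 2 * \<beta> * a * b + \<gamma> * b^2))
                        *\<^sub>R mat2 (a^2) (a * b) (a * b) (b^2)))
    \<and> (a + d \<noteq> 0 \<and> a * d - b * c = 0 \<and> b = 0 \<and> c \<noteq> 0 \<longrightarrow>
         is_sol G A (((a + d) / (\<alpha> * c^2 + 2 * \<beta> * c * d + \<gamma> * d^2))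
                        *\<^sub>R mat2 (c^2) (c * d) (c * d) (d^2)))
    \<and> (a + d \<noteq> 0 \<and> a * d - b * c = 0 \<and> b = 0 \<and> c = 0 \<and> a \<noteq> 0 \<longrightarrow>
         is_sol G A (mat2 (a / \<alpha>) 0 0 0))
    \<and> (a + d \<noteq> 0 \<and> a * d - b * c = 0 \<and> b = 0 \<and> c = 0 \<and> d \<noteq> 0 \<longrightarrow>
         is_sol G A (mat2 0 0 0 (d / \<gamma>)))
    \<and> (a + d \<noteq> 0 \<and> a * d - b * c \<noteq> 0 \<longrightarrow>
         (let \<kappa> = (a + d) / ((\<alpha> * \<gamma> - \<beta>^2) * (a + d)^2
                            + (\<gamma> * b - \<alpha> * c + \<beta> * (a - d))^2)
          in is_sol G A (\<kappa> *\<^sub>R mat2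
               (\<gamma> * a * (a + d) + \<alpha> * c^2 - \<gamma> * b * c - 2 * \<beta> * a * c)
               (\<alpha> * c * d + \<gamma> * a * b - 2 * \<beta> * a * d)
               (\<alpha> * c * d + \<gamma> * a * b - 2 * \<beta> * a * d)
               (\<alpha> * d * (a + d) + \<gamma> * b^2 - \<alpha> * b * c - 2 * \<beta> * b * d))))"
  unfolding hG hA Let_def
  apply (intro conjI impI; (elim conjE)?)
  subgoal by (rule is_sol_mat2_exists[OF h\<alpha> h\<delta>])
  subgoal by (simp add: is_sol_zero_iff trace_mat2)
  subgoal by (rule is_sol_mat2_rank_one) (use h\<alpha> h\<delta> in \<open>auto simp: algebra_simps\<close>)
  subgoal by (rule is_sol_mat2_rank_one) (use h\<alpha> h\<delta> in \<open>auto simp: algebra_simps\<close>)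
  subgoal using is_sol_mat2_rank_one[OF h\<alpha> h\<delta>, where p = 1 and q = 0] by (simp add: scaleR_mat2)
  subgoal using is_sol_mat2_rank_one[OF h\<alpha> h\<delta>, where p = 0 and q = 1] by (simp add: scaleR_mat2)
  subgoal by (rule is_sol_mat2_nonzero_trace[OF h\<alpha> h\<delta>])
  done

end
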